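(* Let $q\in\mathbb{C}$ with $0<|q|<1$, and let $a,b,c$ be complex numbers such that at least one of $a$, $b$, $c$ is of the form $q^n$ with $n\in\{1,2,\ldots\}$ (and such that all terms below are well defined). Then \[ \sum_{k=-\infty}^\infty \frac{(q/a,q/b,q/c)_k}{(a,b,c)_k}(abc)^k q^{k^2-2k} =\frac{(q,ab/q,bc/q,ac/q)_\infty}{(a,b,c,abc/q^2)_\infty} \sum_{k=0}^\infty\frac{(q/a,q/b,q/c)_k}{(q,q^3/abc)_k}q^k, \] and \[ \sum_{k=-\infty}^\infty \frac{(q/a,q/b,q/c)_k}{(aq,bq,cq)_k}(abc)^k q^{k^2} =\frac{(q,ab,bc,ac)_\infty}{(aq,bq,cq,abc/q)_\infty} \sum_{k=0}^\infty\frac{(q/a,q/b,q/c)_k}{(q,q^2/abc)_k}q^k. \]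
   Context: For an integer $n$, the $q$-shifted factorial is $(a)_n=(a;q)_n$ with $(a)_0=1$, $(a)_n=(1-a)(1-aq)\cdots(1-aq^{n-1})$ for $n\ge1$, and $(a)_n=[(1-aq^{-1})(1-aq^{-2})\cdots(1-aq^{n})]^{-1}$ for $n\le -1$. Also $(a_1,\ldots,a_m)_n=(a_1)_n\cdots(a_m)_n$ and $(a_1,\ldots,a_m)_\infty=\lim_{n\to\infty}(a_1,\ldots,a_m)_n$. *)

theory Defs
  imports "HOL-Analysis.Analysis"
begin

text \<open>q-shifted factorial (a;q)_n for integer n, following the paper's convention:
  (a)_0 = 1, (a)_n = (1-a)...(1-aq^(n-1)) for n >= 1,
  (a)_n = [(1-aq^-1)...(1-aq^n)]^-1 for n <= -1.
  (Isabelle's inverse 0 = 0 is used when this reciprocal is of zero.)\<close>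
definition qpoch :: "complex \<Rightarrow> complex \<Rightarrow> int \<Rightarrow> complex" where
  "qpoch a q n =
     (if 0 \<le> n then (\<Prod>j<nat n. (1 - a * q ^ j))
      else inverse (\<Prod>j\<in>{1..nat (- n)}. (1 - a * inverse q ^ j)))"

definition qpoch_inf :: "complex \<Rightarrow> complex \<Rightarrow> complex" where
  "qpoch_inf a q = lim (\<lambda>n. \<Prod>j<n. (1 - a * q ^ j))"

end

(* With a = q^(N+1) both bilateral series terminate: (q/a;q)_k = (q^-N;q)_k vanishes for k > N,
   and the reflection k -> -k (resp. k -> -1-k) multiplies the summand by q^k (resp. -q^(2k+1)).
   Folding the negative half onto the positive one therefore turns each series into a terminating
   very-well-poised sum with A = 1 (resp. A = q), d = q/b, e = q/c.  A limiting case of Watson's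
   transformation turns that sum into a terminating 3phi2 series times a quotient of finite
   products, and since a = q^(N+1) the infinite products on the right reduce to the same
   quotient.  The cases b = q^n and c = q^n follow by symmetry. *)

theory Submission
  imports Defs "HOL-Computational_Algebra.Polynomial"
begin

section \<open>Polynomial functions of bounded degree\<close>

definition poly_fun_le :: "nat \<Rightarrow> ('a::comm_ring_1 \<Rightarrow> 'a) \<Rightarrow> bool" where
  "poly_fun_le n f \<longleftrightarrow> (\<exists>p. degree p \<le> n \<and> f = poly p)"

lemma poly_fun_le_const: "poly_fun_le 0 (\<lambda>u. c)"
  unfolding poly_fun_le_def by (intro exI[of _ "[:c:]"]) auto

lemma poly_fun_le_affine: "poly_fun_le 1 (\<lambda>u. a + b * u)"
  unfolding poly_fun_le_def by (intro exI[of _ "[:a, b:]"]) (auto simp: degree_pCons_le)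

lemma poly_fun_le_mono: "poly_fun_le n f \<Longrightarrow> n \<le> m \<Longrightarrow> poly_fun_le m f"
  unfolding poly_fun_le_def using order.trans by blast

lemma poly_fun_le_mult:
  "poly_fun_le n f \<Longrightarrow> poly_fun_le m g \<Longrightarrow> poly_fun_le (n + m) (\<lambda>u. f u * g u)"
proof -
  assume "poly_fun_le n f" "poly_fun_le m g"
  then obtain p r where "degree p \<le> n" "f = poly p" "degree r \<le> m" "g = poly r"
    unfolding poly_fun_le_def by blast
  then show ?thesis
    unfolding poly_fun_le_def by (intro exI[of _ "p * r"]) (auto intro: order.trans[OF degree_mult_le])
qed

lemma poly_fun_le_add:
  "poly_fun_le n f \<Longrightarrow> poly_fun_le n g \<Longrightarrow> poly_fun_le n (\<lambda>u. f u + g u)"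
proof -
  assume "poly_fun_le n f" "poly_fun_le n g"
  then obtain p r where "degree p \<le> n" "f = poly p" "degree r \<le> n" "g = poly r"
    unfolding poly_fun_le_def by blast
  then show ?thesis
    unfolding poly_fun_le_def by (intro exI[of _ "p + r"]) (auto intro: order.trans[OF degree_add_le_max])
qed

lemma poly_fun_le_sum:
  "(\<And>i. i \<in> I \<Longrightarrow> poly_fun_le n (f i)) \<Longrightarrow> poly_fun_le n (\<lambda>u. \<Sum>i\<in>I. f i u)"
proof (induction I rule: infinite_finite_induct)
  case (infinite I)
  then show ?case using poly_fun_le_mono[OF poly_fun_le_const[of 0]] by simp
next
  case empty
  then show ?case using poly_fun_le_mono[OF poly_fun_le_const[of 0]] by simp
next
  case (insert i I)
  then show ?case by (simp add: poly_fun_le_add)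
qed

lemma poly_fun_le_prod_affine:
  assumes "\<And>u i. i \<in> I \<Longrightarrow> f u i = a i + b i * u"
  shows "poly_fun_le (card I) (\<lambda>u. \<Prod>i\<in>I. f u i)"
proof -
  have "poly_fun_le (card I) (\<lambda>u. \<Prod>i\<in>I. a i + b i * u)"
  proof (induction I rule: infinite_finite_induct)
    case (insert i I)
    then show ?case
      using poly_fun_le_mult[OF poly_fun_le_affine[of "a i" "b i"] insert.IH] by simp
  qed (use poly_fun_le_const in auto)
  then show ?thesis using assms by (simp cong: prod.cong)
qed

lemma poly_fun_le_eqI:
  fixes f g :: "'a::idom \<Rightarrow> 'a"
  assumes "poly_fun_le n f" "poly_fun_le n g" "finite S" "n < card S" "\<And>u. u \<in> S \<Longrightarrow> f u = g u"
  shows "f = g"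
proof -
  obtain p r where "degree p \<le> n" "f = poly p" "degree r \<le> n" "g = poly r"
    using assms(1,2) unfolding poly_fun_le_def by blast
  moreover have "p = r"
    by (rule poly_eqI_degree[of S]) (use assms calculation in auto)
  ultimately show ?thesis by simp
qed

section \<open>Finite q-shifted factorials\<close>

definition qpoch_nat :: "'a::comm_ring_1 \<Rightarrow> 'a \<Rightarrow> nat \<Rightarrow> 'a" where
  "qpoch_nat a q n = (\<Prod>j<n. 1 - a * q ^ j)"

definition qpoch_ivl :: "'a::comm_ring_1 \<Rightarrow> 'a \<Rightarrow> nat \<Rightarrow> nat \<Rightarrow> 'a" where
  "qpoch_ivl a q i j = (\<Prod>t\<in>{i..<j}. 1 - a * q ^ t)"

definition qfalling :: "'a::comm_ring_1 \<Rightarrow> 'a \<Rightarrow> nat \<Rightarrow> 'a" where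
  "qfalling u q k = (\<Prod>j<k. u - q ^ j)"

lemma qpoch_nat_eq_ivl: "qpoch_nat a q n = qpoch_ivl a q 0 n"
  unfolding qpoch_nat_def qpoch_ivl_def by (simp add: atLeast0LessThan)

lemma qpoch_ivl_shift: "qpoch_ivl (a * q ^ s) q i j = qpoch_ivl a q (i + s) (j + s)"
  unfolding qpoch_ivl_def prod.atLeastLessThan_shift_bounds[of _ i s j]
  by (simp add: power_add mult_ac)

lemma qpoch_nat_shift: "qpoch_nat (a * q ^ s) q n = qpoch_ivl a q s (s + n)"
  unfolding qpoch_nat_eq_ivl qpoch_ivl_shift by (simp add: add.commute)

lemma qpoch_nat_mult_q: "qpoch_nat (a * q) q n = qpoch_ivl a q 1 (n + 1)"
  using qpoch_nat_shift[of a q 1 n] by simp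

lemma qpoch_ivl_split:
  "i \<le> j \<Longrightarrow> j \<le> k \<Longrightarrow> qpoch_ivl a q i j * qpoch_ivl a q j k = qpoch_ivl a q i k"
  unfolding qpoch_ivl_def by (rule prod.atLeastLessThan_concat)

lemma qpoch_ivl_empty: "j \<le> i \<Longrightarrow> qpoch_ivl a q i j = 1"
  unfolding qpoch_ivl_def by simp

lemma qpoch_ivl_Suc: "i \<le> j \<Longrightarrow> qpoch_ivl a q i (Suc j) = qpoch_ivl a q i j * (1 - a * q ^ j)"
  unfolding qpoch_ivl_def by (simp add: prod.atLeastLessThan_Suc)

lemma qpoch_ivl_eq_0: "i \<le> t \<Longrightarrow> t < j \<Longrightarrow> a * q ^ t = 1 \<Longrightarrow> qpoch_ivl a q i j = 0"
  unfolding qpoch_ivl_def by (rule prod_zero) auto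

lemma qpoch_ivl_nonzero:
  fixes a q :: "'a::idom"
  shows "(\<And>t. i \<le> t \<Longrightarrow> t < j \<Longrightarrow> a * q ^ t \<noteq> 1) \<Longrightarrow> qpoch_ivl a q i j \<noteq> 0"
  unfolding qpoch_ivl_def by (subst prod_zero_iff) auto

lemma qpoch_nat_0 [simp]: "qpoch_nat a q 0 = 1"
  unfolding qpoch_nat_def by simp

lemma qpoch_nat_Suc: "qpoch_nat a q (Suc n) = qpoch_nat a q n * (1 - a * q ^ n)"
  unfolding qpoch_nat_def by simp

lemma qpoch_nat_Suc': "qpoch_nat a q (Suc n) = (1 - a) * qpoch_nat (a * q) q n"
  unfolding qpoch_nat_def prod.lessThan_Suc_shift by (simp add: mult_ac)

lemma qpoch_nat_eq_0: "t < n \<Longrightarrow> a * q ^ t = 1 \<Longrightarrow> qpoch_nat a q n = 0"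
  unfolding qpoch_nat_def by (rule prod_zero) auto

lemma qpoch_nat_nonzero:
  fixes a q :: "'a::idom"
  shows "(\<And>t. t < n \<Longrightarrow> a * q ^ t \<noteq> 1) \<Longrightarrow> qpoch_nat a q n \<noteq> 0"
  unfolding qpoch_nat_def by (subst prod_zero_iff) auto

lemma qpoch_nat_nonzero_le:
  fixes a q :: "'a::idom"
  shows "qpoch_nat a q n \<noteq> 0 \<Longrightarrow> k \<le> n \<Longrightarrow> qpoch_nat a q k \<noteq> 0"
  unfolding qpoch_nat_def by (auto simp: prod_zero_iff)

lemma qfalling_eq_0: "m < k \<Longrightarrow> qfalling (q ^ m) q k = 0"
  unfolding qfalling_def by (rule prod_zero) auto

lemma qfalling_inverse:
  fixes e q :: "'a::field"
  shows "e \<noteq> 0 \<Longrightarrow> qfalling (inverse e) q k = inverse e ^ k * qpoch_nat e q k"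
proof -
  assume "e \<noteq> 0"
  then have "(\<Prod>j<k. inverse e - q ^ j) = (\<Prod>j<k. inverse e * (1 - e * q ^ j))"
    by (intro prod.cong) (auto simp: field_simps)
  then show ?thesis unfolding qfalling_def qpoch_nat_def by (simp add: prod.distrib)
qed

lemma poly_fun_le_qfalling: "poly_fun_le k (\<lambda>u. qfalling u q k)"
  using poly_fun_le_prod_affine[of "{..<k}" "\<lambda>u j. u - q ^ j" "\<lambda>j. - (q ^ j)" "\<lambda>_. 1"]
  unfolding qfalling_def by simp

lemma poly_fun_le_qpoch_ivl: "poly_fun_le (j - i) (\<lambda>u. qpoch_ivl (c * u) q i j)"
  using poly_fun_le_prod_affine[of "{i..<j}" "\<lambda>u t. 1 - c * u * q ^ t" "\<lambda>_. 1" "\<lambda>t. - (c * q ^ t)"]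
  unfolding qpoch_ivl_def by simp

lemma poly_fun_le_qpoch_nat: "poly_fun_le n (\<lambda>u. qpoch_nat (c * u) q n)"
  using poly_fun_le_prod_affine[of "{..<n}" "\<lambda>u t. 1 - c * u * q ^ t" "\<lambda>_. 1" "\<lambda>t. - (c * q ^ t)"]
  unfolding qpoch_nat_def by simp

lemma qpoch_nat_add: "qpoch_nat a q (m + n) = qpoch_nat a q m * qpoch_nat (a * q ^ m) q n"
  unfolding qpoch_nat_shift by (simp add: qpoch_nat_eq_ivl qpoch_ivl_split)

lemma qpoch_nat_reflect:
  fixes q :: "'a::field"
  assumes "q \<noteq> 0" "y * z = 1"
  shows "qpoch_nat y q k * (\<Prod>j<k. - (z * inverse q ^ j)) = qpoch_nat z (inverse q) k"
  unfolding qpoch_nat_def prod.distrib[symmetric]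
proof (rule prod.cong)
  fix j
  have "q ^ j * inverse q ^ j = 1" using assms(1) by (simp flip: power_mult_distrib)
  then show "(1 - y * q ^ j) * - (z * inverse q ^ j) = 1 - z * inverse q ^ j"
    using assms(2) by (simp add: algebra_simps)
qed simp

lemma qpoch_nat_reverse:
  fixes q :: "'a::field"
  assumes "q \<noteq> 0"
  shows "qpoch_nat (a * q ^ n) (inverse q) n = qpoch_nat (a * q) q n"
proof -
  have "qpoch_nat (a * q ^ n) (inverse q) n = (\<Prod>j<n. 1 - a * q * q ^ (n - Suc j))"
    unfolding qpoch_nat_def
  proof (rule prod.cong)
    fix j assume "j \<in> {..<n}"
    then have "q ^ n = q * q ^ (n - Suc j) * q ^ j" by (simp flip: power_add power_Suc)
    then show "1 - a * q ^ n * inverse q ^ j = 1 - a * q * q ^ (n - Suc j)"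
      using assms by (simp add: field_simps)
  qed simp
  also have "\<dots> = qpoch_nat (a * q) q n"
    unfolding qpoch_nat_def by (rule prod.nat_diff_reindex)
  finally show ?thesis .
qed

lemma qpoch_nat_inverse_add:
  fixes q :: "'a::field"
  assumes "q \<noteq> 0"
  shows "qpoch_nat z (inverse q) (k + n) = qpoch_nat z (inverse q) k * qpoch_nat (z * inverse q ^ (k + n) * q) q n"
proof -
  have "z * inverse q ^ k = z * inverse q ^ (k + n) * q ^ n"
    using assms by (simp add: power_add field_simps)
  then have "qpoch_nat (z * inverse q ^ k) (inverse q) n = qpoch_nat (z * inverse q ^ (k + n) * q) q n"
    by (simp only: qpoch_nat_reverse[OF assms])
  then show ?thesis
    by (simp add: qpoch_nat_add)
qed

lemma qfalling_q_pow:
  fixes q :: "'a::field"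
  assumes "q \<noteq> 0"
  shows "qfalling (q ^ N) q k = q ^ (N * k) * qpoch_nat (inverse q ^ N) q k"
proof -
  have "inverse (inverse q ^ N) = q ^ N" by (simp add: power_inverse)
  then show ?thesis
    using qfalling_inverse[of "inverse q ^ N" q k] assms by (simp add: power_mult)
qed

lemma qfalling_q_pow_diag:
  fixes q :: "'a::field"
  assumes "q \<noteq> 0"
  shows "qfalling (q ^ N) q N = (\<Prod>j<N. - (q ^ j)) * qpoch_nat q q N"
proof -
  have "qfalling (q ^ N) q N = (\<Prod>j<N. - (q ^ j) * (1 - q ^ N * inverse q ^ j))"
    unfolding qfalling_def
  proof (rule prod.cong)
    fix j
    have "q ^ j * inverse q ^ j = 1" using assms by (simp flip: power_mult_distrib)
    then show "q ^ N - q ^ j = - (q ^ j) * (1 - q ^ N * inverse q ^ j)"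
      by (simp add: algebra_simps)
  qed simp
  also have "\<dots> = (\<Prod>j<N. - (q ^ j)) * qpoch_nat (q ^ N) (inverse q) N"
    unfolding qpoch_nat_def by (rule prod.distrib)
  also have "qpoch_nat (q ^ N) (inverse q) N = qpoch_nat q q N"
    using qpoch_nat_reverse[OF assms, of 1 N] by simp
  finally show ?thesis .
qed

lemma prod_power_lessThan_square:
  fixes x :: "'a::comm_monoid_mult"
  shows "(\<Prod>j<n. x ^ j) ^ 2 = x ^ (n\<^sup>2 - n)"
proof (induction n)
  case (Suc n)
  have "(\<Prod>j<Suc n. x ^ j) ^ 2 = (\<Prod>j<n. x ^ j) ^ 2 * x ^ (n * 2)"
    by (simp add: power_mult_distrib flip: power_mult)
  also have "\<dots> = x ^ (n\<^sup>2 - n + n * 2)"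
    by (simp add: Suc.IH power_add)
  also have "n\<^sup>2 - n + n * 2 = (Suc n)\<^sup>2 - Suc n"
    by (simp add: power2_eq_square)
  finally show ?case .
qed simp

section \<open>The q-Chu--Vandermonde sum\<close>

locale q_nonroot_of_unity =
  fixes q :: "'a::field"
  assumes q_nz: "q \<noteq> 0"
    and q_pow_ne_1: "\<And>m. m \<ge> 1 \<Longrightarrow> q ^ m \<noteq> 1"
begin

lemma q_pow_inverse: "q ^ n * inverse q ^ n = 1"
  using q_nz by (simp add: power_mult_distrib[symmetric])

lemma qpoch_nat_q_nonzero: "qpoch_nat q q n \<noteq> 0"
  by (rule qpoch_nat_nonzero) (metis power_Suc q_pow_ne_1 le_add1 plus_1_eq_Suc)

lemma q_pow_inj: "q ^ i = q ^ j \<Longrightarrow> i = j"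
proof (induction i j rule: linorder_wlog)
  case (le i j)
  have "q ^ i * q ^ (j - i) = q ^ j" using \<open>i \<le> j\<close> by (simp flip: power_add)
  then have "q ^ i * q ^ (j - i) = q ^ i * 1" using le.prems by simp
  then have "q ^ (j - i) = 1" using q_nz by (metis mult_cancel_left power_eq_0_iff)
  then show ?case using le q_pow_ne_1[of "j - i"] by (cases "j - i") auto
qed simp

lemma qpoch_nat_q_inverse_eq_0: "N < k \<Longrightarrow> qpoch_nat (inverse q ^ N) q k = 0"
  by (rule qpoch_nat_eq_0[of N]) (auto simp: mult.commute q_pow_inverse)

text \<open>Since g N (N + 1) = 0, summing this identity over k shows that the sum for N + 1 is
  B times the sum for N.\<close>

lemma qvandermonde_telescope_step:
  fixes B :: 'a
  defines "t \<equiv> \<lambda>N k. qpoch_nat (inverse q ^ N) q k * qpoch_nat B q k / qpoch_nat q q k * q ^ k"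
    and "g \<equiv> \<lambda>N M. qpoch_nat (inverse q ^ N) q M * qpoch_nat B q (Suc M) / qpoch_nat q q M"
  shows "t (Suc N) (Suc M) - B * t N (Suc M) = g N (Suc M) - g N M"
proof -
  define w where "w = inverse q"
  define v where "v = w ^ Suc N"
  have wN: "w ^ N = v * q"
    using q_nz by (simp add: v_def w_def)
  have "1 - q * q ^ M \<noteq> 0" using q_pow_ne_1[of "Suc M"] by simp
  moreover have "qpoch_nat q q M \<noteq> 0" by (rule qpoch_nat_q_nonzero)
  moreover have v_Suc: "qpoch_nat v q (Suc M) = (1 - v) * qpoch_nat (w ^ N) q M"
    unfolding qpoch_nat_Suc' wN ..
  ultimately show ?thesis
    unfolding t_def g_def w_def[symmetric] v_def[symmetric] v_Suc
    unfolding qpoch_nat_Suc wN by (simp add: divide_simps) algebra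
qed

theorem qvandermonde:
  "(\<Sum>k\<le>N. qpoch_nat (inverse q ^ N) q k * qpoch_nat B q k / qpoch_nat q q k * q ^ k) = B ^ N"
proof (induction N)
  case 0
  show ?case by simp
next
  case (Suc N)
  define t where "t \<equiv> \<lambda>N k. qpoch_nat (inverse q ^ N) q k * qpoch_nat B q k / qpoch_nat q q k * q ^ k"
  define g where "g \<equiv> \<lambda>N M. qpoch_nat (inverse q ^ N) q M * qpoch_nat B q (Suc M) / qpoch_nat q q M"
  have step: "t (Suc N) (Suc k) - B * t N (Suc k) = g N (Suc k) - g N k" for k
    unfolding t_def g_def by (rule qvandermonde_telescope_step)
  have "(\<Sum>k\<le>Suc N. t (Suc N) k) - B * (\<Sum>k\<le>Suc N. t N k) = (\<Sum>k\<le>Suc N. t (Suc N) k - B * t N k)"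
    by (simp only: sum_subtractf sum_distrib_left)
  also have "\<dots> = (1 - B) + (\<Sum>k<Suc N. g N (Suc k) - g N k)"
    by (simp only: sum.atMost_Suc_shift step lessThan_Suc_atMost) (simp add: t_def)
  also have "\<dots> = 0"
    by (simp only: sum_lessThan_telescope) (simp add: g_def qpoch_nat_Suc[of B q 0] qpoch_nat_q_inverse_eq_0)
  finally have "(\<Sum>k\<le>Suc N. t (Suc N) k) = B * (\<Sum>k\<le>Suc N. t N k)" by simp
  also have "(\<Sum>k\<le>Suc N. t N k) = (\<Sum>k\<le>N. t N k)"
    by (simp add: t_def qpoch_nat_q_inverse_eq_0)
  finally show ?case using Suc.IH by (simp add: t_def)
qed

end

section \<open>A limiting case of Watson's transformation\<close>

locale qwatson = q_nonroot_of_unity +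
  fixes A :: "'a::field"
  assumes A_nz: "A \<noteq> 0"
    and A_q_pow_ne_1: "\<And>j. j \<ge> 1 \<Longrightarrow> A * q ^ j \<noteq> 1"
begin

text \<open>The weight (1 - A q^(2r)) (A;q)_r / ((1 - A) (q;q)_r) of a very-well-poised series, written
  without the division by 1 - A so that A = 1 is allowed.\<close>

definition vwp_weight :: "nat \<Rightarrow> 'a" where
  "vwp_weight r = (if r = 0 then 1 else qpoch_ivl A q 1 r * (1 - A * q ^ (2 * r)) / qpoch_nat q q r)"

text \<open>Multiplied by (Aq/d;q)_N (Aq/e;q)_N, the two sides of the transformation below become
  lpoly N d u and rpoly N d u at u = 1/e: polynomials of degree N in u, expanded in the
  Newton basis qfalling u q k. They are shown to agree at the N + 1 points q^m (m < N) and
  1/(A q^N). At q^m both sides reduce, by the symmetries lpoly_swap and rpoly_swap, to the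
  case m < N of the identity; at 1/(A q^N) the left side has a single term and the right side is the
  q-Chu--Vandermonde sum.\<close>

definition lcoeff :: "nat \<Rightarrow> 'a \<Rightarrow> nat \<Rightarrow> 'a" where
  "lcoeff N d r = vwp_weight r * qfalling (q ^ N) q r * (A\<^sup>2 * q\<^sup>2 / d) ^ r * q ^ (r\<^sup>2 - r)
     * qpoch_nat d q r * qpoch_ivl (A / d) q (r + 1) (N + 1) / qpoch_ivl A q (N + 1) (N + 1 + r)"

definition lpoly :: "nat \<Rightarrow> 'a \<Rightarrow> 'a \<Rightarrow> 'a" where
  "lpoly N d u = (\<Sum>r\<le>N. lcoeff N d r * qfalling u q r * qpoch_ivl (A * q * u) q r N)"

definition rcoeff :: "nat \<Rightarrow> 'a \<Rightarrow> nat \<Rightarrow> 'a" where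
  "rcoeff N d k = qpoch_nat (A * q) q N * qfalling (q ^ N) q k * qpoch_nat d q k / qpoch_nat q q k
     * q ^ k * (\<Prod>j<k. - (A / d * inverse q ^ j))"

definition rpoly :: "nat \<Rightarrow> 'a \<Rightarrow> 'a \<Rightarrow> 'a" where
  "rpoly N d u = (\<Sum>k\<le>N. rcoeff N d k * qfalling u q k * qpoch_nat (A * q / d * u) q (N - k))"

definition swap_factor :: "nat \<Rightarrow> nat \<Rightarrow> 'a \<Rightarrow> 'a" where
  "swap_factor m N d = qpoch_ivl (A / d) q (m + 1) (N + 1) * qpoch_ivl A q (m + 1) (N + 1)"

lemma qpoch_ivl_A_nonzero: "1 \<le> i \<Longrightarrow> qpoch_ivl A q i j \<noteq> 0"
  by (rule qpoch_ivl_nonzero) (use A_q_pow_ne_1 in auto)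

lemma poly_fun_le_lpoly: "poly_fun_le N (lpoly N d)"
  unfolding lpoly_def[abs_def]
proof (rule poly_fun_le_sum)
  fix r assume "r \<in> {..N}"
  moreover have "poly_fun_le (0 + r + (N - r))
      (\<lambda>u. lcoeff N d r * qfalling u q r * qpoch_ivl (A * q * u) q r N)"
    by (intro poly_fun_le_mult poly_fun_le_const poly_fun_le_qfalling poly_fun_le_qpoch_ivl)
  ultimately show "poly_fun_le N (\<lambda>u. lcoeff N d r * qfalling u q r * qpoch_ivl (A * q * u) q r N)"
    by simp
qed

lemma poly_fun_le_rpoly: "poly_fun_le N (rpoly N d)"
  unfolding rpoly_def[abs_def]
proof (rule poly_fun_le_sum)
  fix k assume "k \<in> {..N}"
  moreover have "poly_fun_le (0 + k + (N - k))
      (\<lambda>u. rcoeff N d k * qfalling u q k * qpoch_nat (A * q / d * u) q (N - k))"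
    by (intro poly_fun_le_mult poly_fun_le_const poly_fun_le_qfalling poly_fun_le_qpoch_nat)
  ultimately show "poly_fun_le N (\<lambda>u. rcoeff N d k * qfalling u q k * qpoch_nat (A * q / d * u) q (N - k))"
    by simp
qed

lemma lpoly_swap_term:
  assumes "r \<le> m" "m \<le> N"
  shows "lcoeff N d r * qfalling (q ^ m) q r * qpoch_ivl (A * q * q ^ m) q r N
    = swap_factor m N d * (lcoeff m d r * qfalling (q ^ N) q r * qpoch_ivl (A * q * q ^ N) q r m)"
proof -
  define X where "X = vwp_weight r * qfalling (q ^ N) q r * qfalling (q ^ m) q r
    * (A\<^sup>2 * q\<^sup>2 / d) ^ r * q ^ (r\<^sup>2 - r) * qpoch_nat d q r * qpoch_ivl (A / d) q (Suc r) (Suc m)"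
  define P where "P = qpoch_ivl A q"
  have shift: "qpoch_ivl (A * q * q ^ n) q i j = P (Suc n + i) (Suc n + j)" for n i j
    using qpoch_ivl_shift[of A q "Suc n" i j] by (simp add: P_def mult.assoc add.commute)
  have "qpoch_ivl (A / d) q (Suc r) (Suc N)
      = qpoch_ivl (A / d) q (Suc r) (Suc m) * qpoch_ivl (A / d) q (Suc m) (Suc N)"
    using assms by (simp add: qpoch_ivl_split)
  then have L: "lcoeff N d r * qfalling (q ^ m) q r * qpoch_ivl (A * q * q ^ m) q r N
      = X * qpoch_ivl (A / d) q (Suc m) (Suc N) * P (Suc m + r) (Suc m + N) / P (Suc N) (Suc N + r)"
    unfolding lcoeff_def X_def shift P_def by (simp add: field_simps)
  have R: "lcoeff m d r * qfalling (q ^ N) q r * qpoch_ivl (A * q * q ^ N) q r m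
      = X * P (Suc N + r) (Suc N + m) / P (Suc m) (Suc m + r)"
    unfolding lcoeff_def X_def shift P_def by (simp add: field_simps)
  have "P (Suc m) (Suc m + r) * P (Suc m + r) (Suc m + N) = P (Suc m) (Suc m + N)"
    "P (Suc m) (Suc N) * P (Suc N) (Suc N + r) * P (Suc N + r) (Suc N + m) = P (Suc m) (Suc N + m)"
    unfolding P_def using assms by (simp_all add: qpoch_ivl_split)
  moreover have nz: "P (Suc N) (Suc N + r) \<noteq> 0" "P (Suc m) (Suc m + r) \<noteq> 0"
    unfolding P_def by (simp_all add: qpoch_ivl_A_nonzero)
  ultimately have "P (Suc m + r) (Suc m + N)
      = P (Suc m) (Suc N) * P (Suc N) (Suc N + r) * P (Suc N + r) (Suc N + m) / P (Suc m) (Suc m + r)"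
    by (simp add: field_simps add.commute)
  then show ?thesis
    unfolding L R swap_factor_def P_def[symmetric] using nz by (simp add: field_simps)
qed

lemma lpoly_swap:
  assumes "m \<le> N"
  shows "lpoly N d (q ^ m) = swap_factor m N d * lpoly m d (q ^ N)"
proof -
  have "lpoly N d (q ^ m) = (\<Sum>r\<le>m. lcoeff N d r * qfalling (q ^ m) q r * qpoch_ivl (A * q * q ^ m) q r N)"
    unfolding lpoly_def by (rule sum.mono_neutral_right) (use assms in \<open>auto simp: qfalling_eq_0\<close>)
  also have "\<dots> = swap_factor m N d * lpoly m d (q ^ N)"
    unfolding lpoly_def sum_distrib_left by (rule sum.cong) (use assms lpoly_swap_term in auto)
  finally show ?thesis .
qed

lemma rpoly_swap_term:
  assumes "k \<le> m" "m \<le> N"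
  shows "rcoeff N d k * qfalling (q ^ m) q k * qpoch_nat (A * q / d * q ^ m) q (N - k)
    = swap_factor m N d * (rcoeff m d k * qfalling (q ^ N) q k * qpoch_nat (A * q / d * q ^ N) q (m - k))"
proof -
  have shift: "qpoch_nat (A * q / d * q ^ n) q l = qpoch_ivl (A / d) q (Suc n) (Suc n + l)" for n l
    using qpoch_nat_shift[of "A / d" q "Suc n" l] by (simp add: mult_ac)
  have "qpoch_nat (A * q) q N = qpoch_nat (A * q) q m * qpoch_ivl A q (Suc m) (Suc N)"
    using assms by (simp add: qpoch_nat_mult_q qpoch_ivl_split)
  moreover have idx: "Suc m + (N - k) = Suc N + (m - k)"
    using assms by simp
  moreover have "qpoch_ivl (A / d) q (Suc m) (Suc m + (N - k))
      = qpoch_ivl (A / d) q (Suc m) (Suc N) * qpoch_ivl (A / d) q (Suc N) (Suc N + (m - k))"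
    unfolding idx by (rule qpoch_ivl_split[symmetric]) (use assms in auto)
  ultimately show ?thesis
    unfolding rcoeff_def swap_factor_def shift by (simp add: divide_inverse mult_ac)
qed

lemma rpoly_swap:
  assumes "m \<le> N"
  shows "rpoly N d (q ^ m) = swap_factor m N d * rpoly m d (q ^ N)"
proof -
  have "rpoly N d (q ^ m) = (\<Sum>k\<le>m. rcoeff N d k * qfalling (q ^ m) q k * qpoch_nat (A * q / d * q ^ m) q (N - k))"
    unfolding rpoly_def by (rule sum.mono_neutral_right) (use assms in \<open>auto simp: qfalling_eq_0\<close>)
  also have "\<dots> = swap_factor m N d * rpoly m d (q ^ N)"
    unfolding rpoly_def sum_distrib_left by (rule sum.cong) (use assms rpoly_swap_term in auto)
  finally show ?thesis .
qed

lemma lpoly_at_pole: "lpoly N d (inverse (A * q ^ N)) = lcoeff N d N * qfalling (inverse (A * q ^ N)) q N"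
proof -
  define u where "u = inverse (A * q ^ N)"
  have "qpoch_ivl (A * q * u) q r N = 0" if "r < N" for r
  proof (rule qpoch_ivl_eq_0[of r "N - 1"])
    have "q * q ^ (N - 1) = q ^ N" using that by (simp flip: power_Suc)
    then show "A * q * u * q ^ (N - 1) = 1"
      using A_nz q_nz unfolding u_def by (simp add: field_simps)
  qed (use that in auto)
  then have "lpoly N d u = (\<Sum>r\<in>{N}. lcoeff N d r * qfalling u q r * qpoch_ivl (A * q * u) q r N)"
    unfolding lpoly_def by (intro sum.mono_neutral_right) auto
  then show ?thesis by (simp add: u_def qpoch_ivl_empty)
qed

lemma pole_power_identity:
  assumes "d \<noteq> 0"
  shows "(\<Prod>j<N. - (q ^ j)) * (A\<^sup>2 * q\<^sup>2 / d) ^ N * q ^ (N\<^sup>2 - N) * inverse (A * q ^ N) ^ N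
    = (\<Prod>j<N. - (inverse d * inverse q ^ j)) * (A * q ^ N) ^ N"
proof -
  define Q where "Q = (\<Prod>j<N. q ^ j)"
  have Q_nz: "Q \<noteq> 0" using q_nz by (simp add: Q_def)
  have t: "q ^ (N\<^sup>2 - N) = Q * Q"
    using prod_power_lessThan_square[of q N] by (simp add: Q_def power2_eq_square)
  have "q ^ (N\<^sup>2 - N) * q ^ N = (q ^ N) ^ N"
    by (simp add: power2_eq_square power_mult flip: power_add)
  then have e: "(A * q ^ N) ^ N = A ^ N * (Q * Q * q ^ N)"
    by (simp add: t power_mult_distrib)
  have P1: "(\<Prod>j<N. - (q ^ j)) = (- 1) ^ N * Q"
    by (simp add: Q_def prod_uminus)
  have P2: "(\<Prod>j<N. - (inverse d * inverse q ^ j)) = (- 1) ^ N * inverse d ^ N * inverse Q"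
    by (simp add: Q_def prod_uminus prod.distrib power_inverse flip: prod_inversef)
  have E: "(A\<^sup>2 * q\<^sup>2 / d) ^ N = A ^ N * A ^ N * (q ^ N * q ^ N) / d ^ N"
    by (simp add: power_mult_distrib power_divide power2_eq_square)
  show ?thesis
    unfolding P1 P2 E t unfolding power_inverse e using Q_nz q_nz A_nz assms by (simp add: field_simps)
qed

lemma lcoeff_diag_at_pole:
  assumes "1 \<le> N" "d \<noteq> 0"
  shows "lcoeff N d N * qfalling (inverse (A * q ^ N)) q N
    = qpoch_nat (A * q) q N * qpoch_nat (inverse d) (inverse q) N * (A * q ^ N) ^ N"
proof -
  define e where "e = A * q ^ N"
  have e_nz: "e \<noteq> 0" using A_nz q_nz by (simp add: e_def)
  have D_nz: "qpoch_ivl A q (N + 1) (N + 1 + N) \<noteq> 0" by (simp add: qpoch_ivl_A_nonzero)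
  have w1: "vwp_weight N * qpoch_nat q q N = qpoch_ivl A q 1 N * (1 - A * q ^ (N + N))"
    using assms qpoch_nat_q_nonzero by (simp add: vwp_weight_def mult_2)
  have w2: "qpoch_nat e q N = (1 - A * q ^ N) * qpoch_ivl A q (N + 1) (N + N)"
    using assms qpoch_ivl_split[of N "N + 1" "N + N" A q]
    by (simp add: e_def qpoch_nat_shift qpoch_ivl_def)
  have w3: "qpoch_ivl A q (N + 1) (N + 1 + N) = qpoch_ivl A q (N + 1) (N + N) * (1 - A * q ^ (N + N))"
    using qpoch_ivl_Suc[of "N + 1" "N + N" A q] assms by simp
  have w4: "qpoch_nat (A * q) q N = qpoch_ivl A q 1 N * (1 - A * q ^ N)"
    using qpoch_ivl_Suc[of 1 N A q] assms by (simp add: qpoch_nat_mult_q)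
  have "qpoch_ivl A q (N + 1) (N + N) \<noteq> 0" "1 - A * q ^ (N + N) \<noteq> 0"
    using D_nz unfolding w3 by auto
  then have weight: "vwp_weight N * qpoch_nat q q N * qpoch_nat e q N / qpoch_ivl A q (N + 1) (N + 1 + N)
      = qpoch_nat (A * q) q N"
    unfolding w1 w2 w3 w4 by (simp add: field_simps)
  have "lcoeff N d N * qfalling (inverse e) q N
      = (vwp_weight N * qpoch_nat q q N * qpoch_nat e q N / qpoch_ivl A q (N + 1) (N + 1 + N))
        * ((\<Prod>j<N. - (q ^ j)) * (A\<^sup>2 * q\<^sup>2 / d) ^ N * q ^ (N\<^sup>2 - N) * inverse e ^ N) * qpoch_nat d q N"
    unfolding lcoeff_def qfalling_q_pow_diag[OF q_nz] qfalling_inverse[OF e_nz]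
    by (simp add: qpoch_ivl_empty divide_inverse mult_ac)
  also have "\<dots> = qpoch_nat (A * q) q N * (qpoch_nat d q N * (\<Prod>j<N. - (inverse d * inverse q ^ j))) * e ^ N"
    unfolding weight using pole_power_identity[OF assms(2), of N, folded e_def] by (simp only: mult_ac)
  also have "\<dots> = qpoch_nat (A * q) q N * qpoch_nat (inverse d) (inverse q) N * e ^ N"
    using qpoch_nat_reflect[OF q_nz, of d "inverse d" N] assms(2) by simp
  finally show ?thesis unfolding e_def .
qed

lemma rcoeff_qfalling_inverse:
  assumes "e \<noteq> 0"
  shows "rcoeff N d k * qfalling (inverse e) q k
    = qpoch_nat (A * q) q N * (qpoch_nat (inverse q ^ N) q k * qpoch_nat d q k * qpoch_nat e q k
        / qpoch_nat q q k * q ^ k) * (\<Prod>j<k. - (A * q ^ N / (d * e) * inverse q ^ j))"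
proof -
  have "(\<Prod>j<k. - (A / d * inverse q ^ j)) * q ^ (N * k) * inverse e ^ k
      = (\<Prod>j<k. - (A / d * inverse q ^ j) * (q ^ N * inverse e))"
    by (simp only: prod.distrib prod_constant card_lessThan power_mult power_mult_distrib mult.assoc)
  also have "\<dots> = (\<Prod>j<k. - (A * q ^ N / (d * e) * inverse q ^ j))"
    by (simp add: divide_inverse mult_ac)
  finally have sign: "(\<Prod>j<k. - (A / d * inverse q ^ j)) * q ^ (N * k) * inverse e ^ k
      = (\<Prod>j<k. - (A * q ^ N / (d * e) * inverse q ^ j))" .
  show ?thesis
    unfolding rcoeff_def qfalling_q_pow[OF q_nz] qfalling_inverse[OF assms] sign[symmetric]
    by (simp only: divide_inverse mult_ac)
qed

lemma rpoly_at_pole: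
  assumes "d \<noteq> 0"
  shows "rpoly N d (inverse (A * q ^ N))
    = qpoch_nat (A * q) q N * qpoch_nat (inverse d) (inverse q) N * (A * q ^ N) ^ N"
proof -
  define e where "e = A * q ^ N"
  define W where "W = qpoch_nat (inverse d) (inverse q) N"
  have e_nz: "e \<noteq> 0" using A_nz q_nz by (simp add: e_def)
  have "rcoeff N d k * qfalling (inverse e) q k * qpoch_nat (A * q / d * inverse e) q (N - k)
      = qpoch_nat (A * q) q N * W
        * (qpoch_nat (inverse q ^ N) q k * qpoch_nat e q k / qpoch_nat q q k * q ^ k)"
    if "k \<le> N" for k
  proof -
    have "A * q / d * inverse e = inverse d * inverse q ^ (k + (N - k)) * q"
      using that A_nz q_nz by (simp add: e_def field_simps power_inverse)
    then have split: "qpoch_nat d q k * (\<Prod>j<k. - (inverse d * inverse q ^ j))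
        * qpoch_nat (A * q / d * inverse e) q (N - k) = W"
      unfolding qpoch_nat_reflect[OF q_nz right_inverse[OF assms]] W_def
      using qpoch_nat_inverse_add[OF q_nz, of "inverse d" k "N - k"] that by simp
    have "A * q ^ N / (d * e) = inverse d"
      using e_nz by (simp add: e_def field_simps)
    then have "rcoeff N d k * qfalling (inverse e) q k * qpoch_nat (A * q / d * inverse e) q (N - k)
        = qpoch_nat (A * q) q N * (qpoch_nat (inverse q ^ N) q k * qpoch_nat e q k / qpoch_nat q q k * q ^ k)
          * (qpoch_nat d q k * (\<Prod>j<k. - (inverse d * inverse q ^ j)) * qpoch_nat (A * q / d * inverse e) q (N - k))"
      unfolding rcoeff_qfalling_inverse[OF e_nz] by (simp only: divide_inverse mult_ac)
    then show ?thesis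
      unfolding split by (simp only: mult_ac)
  qed
  then have "rpoly N d (inverse e) = qpoch_nat (A * q) q N * W
      * (\<Sum>k\<le>N. qpoch_nat (inverse q ^ N) q k * qpoch_nat e q k / qpoch_nat q q k * q ^ k)"
    unfolding rpoly_def sum_distrib_left by (intro sum.cong) auto
  then show ?thesis
    unfolding qvandermonde by (simp add: e_def W_def)
qed

theorem lpoly_eq_rpoly:
  assumes "d \<noteq> 0"
  shows "lpoly N d = rpoly N d"
proof (induction N rule: less_induct)
  case (less N)
  show ?case
  proof (cases "N = 0")
    case True
    then show ?thesis
      by (simp add: lpoly_def rpoly_def lcoeff_def rcoeff_def vwp_weight_def qfalling_def qpoch_ivl_def)
  next
    case False
    define u0 where "u0 = inverse (A * q ^ N)"
    have "u0 \<notin> (\<lambda>m. q ^ m) ` {..<N}"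
    proof
      assume "u0 \<in> (\<lambda>m. q ^ m) ` {..<N}"
      then obtain m where "u0 = q ^ m" by auto
      then have "A * q ^ (N + m) = 1"
        using A_nz q_nz by (simp add: u0_def power_add field_simps)
      then show False using A_q_pow_ne_1[of "N + m"] False by simp
    qed
    moreover have "inj_on (\<lambda>m. q ^ m) {..<N}"
      by (rule inj_onI) (rule q_pow_inj)
    ultimately have card: "card (insert u0 ((\<lambda>m. q ^ m) ` {..<N})) = Suc N"
      by (simp add: card_image)
    show ?thesis
    proof (rule poly_fun_le_eqI[OF poly_fun_le_lpoly poly_fun_le_rpoly])
      fix u assume "u \<in> insert u0 ((\<lambda>m. q ^ m) ` {..<N})"
      then consider "u = u0" | m where "m < N" "u = q ^ m" by auto
      then show "lpoly N d u = rpoly N d u"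
      proof cases
        case 1
        then show ?thesis unfolding u0_def
          using lpoly_at_pole lcoeff_diag_at_pole rpoly_at_pole assms False by simp
      next
        case 2
        then show ?thesis
          using lpoly_swap rpoly_swap less.IH[of m] by simp
      qed
    qed (use card in auto)
  qed
qed

lemma lpoly_at_inverse:
  assumes "e \<noteq> 0" "qpoch_nat (A * q / d) q N \<noteq> 0" "qpoch_nat (A * q / e) q N \<noteq> 0"
  shows "lpoly N d (inverse e) = qpoch_nat (A * q / d) q N * qpoch_nat (A * q / e) q N
    * (\<Sum>m\<le>N. vwp_weight m * qpoch_nat (inverse q ^ N) q m * qpoch_nat d q m * qpoch_nat e q m
        / (qpoch_nat (A * q ^ (N + 1)) q m * qpoch_nat (A * q / d) q m * qpoch_nat (A * q / e) q m)
        * (A\<^sup>2 * q ^ (N + 2) / (d * e)) ^ m * q ^ (m\<^sup>2 - m))"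
proof -
  have split: "qpoch_nat (A * q / x) q N = qpoch_nat (A * q / x) q m * qpoch_ivl (A / x) q (m + 1) (N + 1)"
    if "m \<le> N" for x m
    using that qpoch_nat_mult_q[of "A / x" q] by (simp add: qpoch_ivl_split)
  have "lcoeff N d m * qfalling (inverse e) q m * qpoch_ivl (A * q * inverse e) q m N
      = qpoch_nat (A * q / d) q N * qpoch_nat (A * q / e) q N
        * (vwp_weight m * qpoch_nat (inverse q ^ N) q m * qpoch_nat d q m * qpoch_nat e q m
        / (qpoch_nat (A * q ^ (N + 1)) q m * qpoch_nat (A * q / d) q m * qpoch_nat (A * q / e) q m)
        * (A\<^sup>2 * q ^ (N + 2) / (d * e)) ^ m * q ^ (m\<^sup>2 - m))"
    if "m \<le> N" for m
  proof -
    define C where "C = vwp_weight m * qpoch_nat (inverse q ^ N) q m * qpoch_nat d q m * qpoch_nat e q m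
      / qpoch_nat (A * q ^ (N + 1)) q m"
    have nz: "qpoch_nat (A * q / d) q m \<noteq> 0" "qpoch_nat (A * q / e) q m \<noteq> 0"
      using assms that qpoch_nat_nonzero_le by blast+
    have "qpoch_ivl (A * q * inverse e) q m N = qpoch_ivl (A / e) q (m + 1) (N + 1)"
      using qpoch_ivl_shift[of "A / e" q 1 m N] by (simp add: field_simps)
    moreover have "qpoch_ivl A q (N + 1) (N + 1 + m) = qpoch_nat (A * q ^ (N + 1)) q m"
      by (rule qpoch_nat_shift[symmetric])
    ultimately have "lcoeff N d m * qfalling (inverse e) q m * qpoch_ivl (A * q * inverse e) q m N
        = C * ((A\<^sup>2 * q\<^sup>2 / d) ^ m * q ^ (N * m) * inverse e ^ m) * q ^ (m\<^sup>2 - m)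
          * qpoch_ivl (A / d) q (m + 1) (N + 1) * qpoch_ivl (A / e) q (m + 1) (N + 1)"
      unfolding lcoeff_def qfalling_q_pow[OF q_nz] qfalling_inverse[OF assms(1)] C_def
      by (simp only: divide_inverse mult_ac)
    also have "(A\<^sup>2 * q\<^sup>2 / d) ^ m * q ^ (N * m) * inverse e ^ m = (A\<^sup>2 * q ^ (N + 2) / (d * e)) ^ m"
      by (simp add: power_mult_distrib power_divide power_add power_mult power2_eq_square field_simps)
    also have "C * (A\<^sup>2 * q ^ (N + 2) / (d * e)) ^ m * q ^ (m\<^sup>2 - m)
          * qpoch_ivl (A / d) q (m + 1) (N + 1) * qpoch_ivl (A / e) q (m + 1) (N + 1)
        = qpoch_nat (A * q / d) q N * qpoch_nat (A * q / e) q N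
          * (C / (qpoch_nat (A * q / d) q m * qpoch_nat (A * q / e) q m)
          * (A\<^sup>2 * q ^ (N + 2) / (d * e)) ^ m * q ^ (m\<^sup>2 - m))"
      unfolding split[OF that] using nz by (simp add: field_simps)
    finally show ?thesis
      unfolding C_def by (simp add: field_simps)
  qed
  then show ?thesis
    unfolding lpoly_def sum_distrib_left by (intro sum.cong) auto
qed

lemma rpoly_at_inverse:
  assumes "d \<noteq> 0" "e \<noteq> 0" "qpoch_nat (d * e * inverse q ^ N / A) q N \<noteq> 0"
  shows "rpoly N d (inverse e) = qpoch_nat (A * q) q N * qpoch_nat (A * q / (d * e)) q N
    * (\<Sum>k\<le>N. qpoch_nat (inverse q ^ N) q k * qpoch_nat d q k * qpoch_nat e q k
        / (qpoch_nat q q k * qpoch_nat (d * e * inverse q ^ N / A) q k) * q ^ k)"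
proof -
  define X where "X = A * q / (d * e)"
  define Y where "Y = d * e * inverse q ^ N / A"
  define Z where "Z = A * q ^ N / (d * e)"
  have YZ: "Y * Z = 1"
    using assms A_nz q_nz by (simp add: Y_def Z_def field_simps power_inverse)
  have ZX: "Z * inverse q ^ (0 + N) * q = X" "Z * inverse q ^ (k + (N - k)) * q = X" if "k \<le> N" for k
    using that q_nz by (simp_all add: X_def Z_def field_simps power_inverse)
  have "rcoeff N d k * qfalling (inverse e) q k * qpoch_nat (A * q / d * inverse e) q (N - k)
      = qpoch_nat (A * q) q N * qpoch_nat X q N
        * (qpoch_nat (inverse q ^ N) q k * qpoch_nat d q k * qpoch_nat e q k
           / (qpoch_nat q q k * qpoch_nat Y q k) * q ^ k)"
    if "k \<le> N" for k
  proof -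
    have "qpoch_nat Y q k \<noteq> 0"
      using qpoch_nat_nonzero_le assms(3) that by (simp add: Y_def)
    then have "(\<Prod>j<k. - (Z * inverse q ^ j)) = qpoch_nat Z (inverse q) k / qpoch_nat Y q k"
      using qpoch_nat_reflect[OF q_nz YZ, of k] by (simp add: field_simps)
    moreover have "qpoch_nat Z (inverse q) k * qpoch_nat X q (N - k) = qpoch_nat X q N"
      using qpoch_nat_inverse_add[OF q_nz, of Z k "N - k"] qpoch_nat_inverse_add[OF q_nz, of Z 0 N]
      unfolding ZX[OF that] ZX(1)[OF that] using that by simp
    moreover have "A * q / d * inverse e = X"
      by (simp add: X_def field_simps)
    ultimately show ?thesis
      unfolding rcoeff_qfalling_inverse[OF assms(2)] Z_def[symmetric]
      by (simp add: divide_inverse mult_ac)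
  qed
  then show ?thesis
    unfolding rpoly_def sum_distrib_left by (intro sum.cong) (auto simp: X_def Y_def)
qed

text \<open>Watson's transformation of a terminating very-well-poised 8phi7 series into a 4phi3
  series, in the limit where two of the 8phi7 parameters tend to infinity (the 4phi3 series
  then degenerates to a 3phi2 series).\<close>

theorem limiting_watson_transformation:
  assumes "d \<noteq> 0" "e \<noteq> 0" "qpoch_nat (A * q / d) q N \<noteq> 0" "qpoch_nat (A * q / e) q N \<noteq> 0"
    "qpoch_nat (d * e * inverse q ^ N / A) q N \<noteq> 0"
  shows "(\<Sum>m\<le>N. vwp_weight m * qpoch_nat (inverse q ^ N) q m * qpoch_nat d q m * qpoch_nat e q m
        / (qpoch_nat (A * q ^ (N + 1)) q m * qpoch_nat (A * q / d) q m * qpoch_nat (A * q / e) q m)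
        * (A\<^sup>2 * q ^ (N + 2) / (d * e)) ^ m * q ^ (m\<^sup>2 - m))
    = qpoch_nat (A * q) q N * qpoch_nat (A * q / (d * e)) q N
        / (qpoch_nat (A * q / d) q N * qpoch_nat (A * q / e) q N)
      * (\<Sum>k\<le>N. qpoch_nat (inverse q ^ N) q k * qpoch_nat d q k * qpoch_nat e q k
        / (qpoch_nat q q k * qpoch_nat (d * e * inverse q ^ N / A) q k) * q ^ k)"
  using lpoly_at_inverse[OF assms(2-4)] rpoly_at_inverse[OF assms(1,2,5)] lpoly_eq_rpoly[OF assms(1)]
    assms(3,4) by (simp add: field_simps)

end

section \<open>Infinite products and negative indices\<close>

lemma convergent_prod_qpoch:
  fixes q x :: complex
  assumes "norm q < 1"
  shows "convergent_prod (\<lambda>j. 1 - x * q ^ j)"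
proof -
  have "summable (\<lambda>j. norm x * norm q ^ j)"
    using assms by (intro summable_mult summable_geometric) simp
  then show ?thesis
    by (intro abs_convergent_prod_imp_convergent_prod summable_imp_abs_convergent_prod)
       (simp add: norm_mult norm_power)
qed

lemma qpoch_nat_LIMSEQ:
  fixes q x :: complex
  assumes "norm q < 1"
  shows "(\<lambda>n. qpoch_nat x q n) \<longlonglongrightarrow> prodinf (\<lambda>j. 1 - x * q ^ j)"
  using LIMSEQ_imp_Suc[of "\<lambda>n. qpoch_nat x q n"] convergent_prod_LIMSEQ[OF convergent_prod_qpoch[OF assms]]
  by (simp add: qpoch_nat_def lessThan_Suc_atMost)

lemma qpoch_inf_eq_prodinf:
  fixes q x :: complex
  assumes "norm q < 1"
  shows "qpoch_inf x q = prodinf (\<lambda>j. 1 - x * q ^ j)"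
  unfolding qpoch_inf_def using qpoch_nat_LIMSEQ[OF assms] by (simp add: qpoch_nat_def limI)

lemma qpoch_inf_nonzero:
  fixes q x :: complex
  assumes "norm q < 1" "\<And>j. x * q ^ j \<noteq> 1"
  shows "qpoch_inf x q \<noteq> 0"
  unfolding qpoch_inf_eq_prodinf[OF assms(1)]
  by (rule prodinf_nonzero[OF convergent_prod_qpoch[OF assms(1)]]) (use assms(2) in auto)

lemma qpoch_inf_split:
  fixes q x :: complex
  assumes "norm q < 1"
  shows "qpoch_inf x q = qpoch_nat x q n * qpoch_inf (x * q ^ n) q"
proof -
  have "(\<lambda>m. qpoch_nat x q (n + m)) \<longlonglongrightarrow> qpoch_inf x q"
    using LIMSEQ_ignore_initial_segment[OF qpoch_nat_LIMSEQ[OF assms, of x], of n]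
    by (simp add: qpoch_inf_eq_prodinf[OF assms] add.commute)
  moreover have "(\<lambda>m. qpoch_nat x q (n + m)) \<longlonglongrightarrow> qpoch_nat x q n * qpoch_inf (x * q ^ n) q"
    unfolding qpoch_nat_add qpoch_inf_eq_prodinf[OF assms]
    by (intro tendsto_mult tendsto_const qpoch_nat_LIMSEQ[OF assms])
  ultimately show ?thesis
    using LIMSEQ_unique by blast
qed

lemma qpoch_of_nat: "qpoch a q (int n) = qpoch_nat a q n"
  unfolding qpoch_def qpoch_nat_def by simp

lemma qpoch_minus:
  fixes q y :: complex
  assumes "q \<noteq> 0" "y \<noteq> 0"
  shows "qpoch y q (- int m) = inverse (qpoch_nat (q / y) q m * (\<Prod>j<m. - (y * inverse q * inverse q ^ j)))"
proof -
  have "(\<Prod>j\<in>{1..m}. 1 - y * inverse q ^ j) = qpoch_nat (y * inverse q) (inverse q) m"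
    using prod.atLeast1_atMost_eq[of "\<lambda>j. 1 - y * inverse q ^ j" m]
    by (simp add: qpoch_nat_def mult.assoc)
  also have "\<dots> = qpoch_nat (q / y) q m * (\<Prod>j<m. - (y * inverse q * inverse q ^ j))"
    using qpoch_nat_reflect[OF assms(1), of "q / y" "y * inverse q" m] assms by simp
  finally show ?thesis
    by (cases "m = 0") (simp_all add: qpoch_def)
qed

lemma qpoch_minus_ratio:
  fixes q y z :: complex
  assumes "q \<noteq> 0" "y \<noteq> 0" "z \<noteq> 0"
  shows "qpoch z q (- int m) / qpoch y q (- int m) = (y / z) ^ m * (qpoch_nat (q / y) q m / qpoch_nat (q / z) q m)"
proof -
  define C where "C = (\<lambda>x. \<Prod>j<m. - (x * inverse q * inverse q ^ j))"
  have C_nz: "C z \<noteq> 0" using assms by (simp add: C_def)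
  have "(y / z) ^ m * C z = (\<Prod>j<m. y / z * - (z * inverse q * inverse q ^ j))"
    by (simp only: C_def prod.distrib prod_constant card_lessThan)
  also have "\<dots> = C y"
    unfolding C_def using assms(3) by (intro prod.cong) auto
  finally have Cy: "C y = (y / z) ^ m * C z" ..
  have "qpoch z q (- int m) / qpoch y q (- int m)
      = qpoch_nat (q / y) q m * C y / (qpoch_nat (q / z) q m * C z)"
    unfolding qpoch_minus[OF assms(1,2)] qpoch_minus[OF assms(1,3)] C_def
    by (simp add: divide_inverse mult.commute)
  then show ?thesis
    unfolding Cy using C_nz by simp
qed

section \<open>The bilateral series at a = q^(N+1)\<close>

lemma has_sum_int_of_vanishing:
  fixes f :: "int \<Rightarrow> 'a::topological_comm_monoid_add"
  assumes "\<And>m. N < m \<Longrightarrow> f (int m) = 0" "\<And>m. N < m \<Longrightarrow> f (- int (Suc m)) = 0"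
  shows "(f has_sum ((\<Sum>m\<le>N. f (int m)) + (\<Sum>m\<le>N. f (- int (Suc m))))) UNIV"
proof (rule has_sum_finite_neutralI)
  let ?B = "int ` {..N} \<union> (\<lambda>m. - int (Suc m)) ` {..N}"
  show "finite ?B" "?B \<subseteq> UNIV" by auto
  show "f x = 0" if "x \<in> UNIV - ?B" for x
  proof (cases "0 \<le> x")
    case True
    define m where "m = nat x"
    have m: "x = int m" using True by (simp add: m_def)
    then have "m \<notin> {..N}" using that by auto
    then show ?thesis using assms(1) m by simp
  next
    case False
    define m where "m = nat (- x - 1)"
    have m: "x = - int (Suc m)" using False by (simp add: m_def)
    then have "m \<notin> {..N}" using that by auto
    then show ?thesis using assms(2) m by simp
  qed
  show "(\<Sum>m\<le>N. f (int m)) + (\<Sum>m\<le>N. f (- int (Suc m))) = sum f ?B"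
    by (subst sum.union_disjoint) (auto simp: sum.reindex inj_on_def)
qed

lemma power_int_square_minus_double:
  fixes x :: "'a::field"
  assumes "x \<noteq> 0"
  shows "x powi (int m ^ 2 - 2 * int m) = x ^ (m\<^sup>2 - m) / x ^ m"
proof -
  have "int m ^ 2 - 2 * int m = int (m\<^sup>2 - m) - int m"
    by (simp add: power2_eq_square of_nat_diff)
  then show ?thesis
    using assms by (simp add: power_int_diff flip: power_int_of_nat)
qed

definition bilateral_summand :: "complex \<Rightarrow> complex \<Rightarrow> complex \<Rightarrow> complex \<Rightarrow> int \<Rightarrow> complex" where
  "bilateral_summand q a b c k = qpoch (q/a) q k * qpoch (q/b) q k * qpoch (q/c) q k
     / (qpoch a q k * qpoch b q k * qpoch c q k) * (a*b*c) powi k * q powi (k^2 - 2*k)"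

definition bilateral_summand_shifted :: "complex \<Rightarrow> complex \<Rightarrow> complex \<Rightarrow> complex \<Rightarrow> int \<Rightarrow> complex" where
  "bilateral_summand_shifted q a b c k = qpoch (q/a) q k * qpoch (q/b) q k * qpoch (q/c) q k
     / (qpoch (a*q) q k * qpoch (b*q) q k * qpoch (c*q) q k) * (a*b*c) powi k * q powi (k^2)"

lemma bilateral_summand_of_nat:
  "bilateral_summand q a b c (int m) = qpoch_nat (q/a) q m * qpoch_nat (q/b) q m * qpoch_nat (q/c) q m
     / (qpoch_nat a q m * qpoch_nat b q m * qpoch_nat c q m) * (a*b*c) ^ m * q powi (int m ^ 2 - 2 * int m)"
  unfolding bilateral_summand_def qpoch_of_nat by simp

lemma bilateral_summand_shifted_of_nat:
  "bilateral_summand_shifted q a b c (int m) = qpoch_nat (q/a) q m * qpoch_nat (q/b) q m * qpoch_nat (q/c) q m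
     / (qpoch_nat (a*q) q m * qpoch_nat (b*q) q m * qpoch_nat (c*q) q m) * (a*b*c) ^ m * q ^ (m\<^sup>2)"
  unfolding bilateral_summand_shifted_def qpoch_of_nat by (simp flip: of_nat_power)

lemma bilateral_summand_reflect:
  fixes q a b c :: complex
  assumes "q \<noteq> 0" "a \<noteq> 0" "b \<noteq> 0" "c \<noteq> 0"
  shows "bilateral_summand q a b c (- int m) = q ^ m * bilateral_summand q a b c (int m)"
proof -
  have ratio: "qpoch (q/x) q (- int m) / qpoch x q (- int m) = (x * x / q) ^ m * (qpoch_nat (q/x) q m / qpoch_nat x q m)"
    if "x \<noteq> 0" for x
    using qpoch_minus_ratio[of q x "q/x" m] assms(1) that by simp
  have exponent: "(- int m)\<^sup>2 - 2 * - int m = int (m\<^sup>2 - m + m + m + m)"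
    by (simp add: power2_eq_square of_nat_diff)
  have minus: "(a*b*c) powi (- int m) * q powi ((- int m)\<^sup>2 - 2 * - int m)
      = inverse ((a*b*c) ^ m) * (q ^ (m\<^sup>2 - m) * q ^ m * q ^ m * q ^ m)"
    unfolding exponent power_int_of_nat by (simp add: power_int_minus power_add)
  define R where "R = qpoch_nat (q/a) q m / qpoch_nat a q m * (qpoch_nat (q/b) q m / qpoch_nat b q m)
    * (qpoch_nat (q/c) q m / qpoch_nat c q m)"
  have "bilateral_summand q a b c (- int m)
      = R * ((a * a / q) ^ m * (b * b / q) ^ m * (c * c / q) ^ m
        * (inverse ((a*b*c) ^ m) * (q ^ (m\<^sup>2 - m) * q ^ m * q ^ m * q ^ m)))"
    unfolding bilateral_summand_def times_divide_times_eq[symmetric] mult.assoc[of _ _ "q powi _"] minus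
      ratio[OF assms(2)] ratio[OF assms(3)] ratio[OF assms(4)] R_def
    by (simp only: mult_ac)
  also have "\<dots> = q ^ m * (R * ((a*b*c) ^ m * (q ^ (m\<^sup>2 - m) / q ^ m)))"
    using assms by (simp add: field_simps power_mult_distrib)
  also have "R * ((a*b*c) ^ m * (q ^ (m\<^sup>2 - m) / q ^ m)) = bilateral_summand q a b c (int m)"
    unfolding bilateral_summand_of_nat R_def power_int_square_minus_double[OF assms(1)]
    by (simp add: field_simps)
  finally show ?thesis .
qed

lemma bilateral_summand_shifted_reflect:
  fixes q a b c :: complex
  assumes "q \<noteq> 0" "a \<noteq> 0" "b \<noteq> 0" "c \<noteq> 0" "a \<noteq> 1" "b \<noteq> 1" "c \<noteq> 1"
  shows "bilateral_summand_shifted q a b c (- int (Suc m))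
    = - (q ^ (2 * m + 1)) * bilateral_summand_shifted q a b c (int m)"
proof -
  have ratio: "qpoch (q/x) q (- int (Suc m)) / qpoch (x*q) q (- int (Suc m))
      = - (x ^ (2 * m + 1)) * (qpoch_nat (q/x) q m / qpoch_nat (x*q) q m)"
    if "x \<noteq> 0" "x \<noteq> 1" for x
  proof -
    have "x * q / (q / x) = x * x" "q / (x * q) = inverse x" "q / (q / x) = x"
      using assms(1) that by (simp_all add: field_simps)
    then have "qpoch (q/x) q (- int (Suc m)) / qpoch (x*q) q (- int (Suc m))
        = (x * x) ^ Suc m * (qpoch_nat (inverse x) q (Suc m) / qpoch_nat x q (Suc m))"
      using qpoch_minus_ratio[of q "x*q" "q/x" "Suc m"] assms(1) that by simp
    also have "\<dots> = (x * x) ^ Suc m * ((1 - inverse x) / (1 - x)) * (qpoch_nat (q/x) q m / qpoch_nat (x*q) q m)"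
      by (simp add: qpoch_nat_Suc' times_divide_times_eq divide_inverse mult_ac)
    also have "(x * x) ^ Suc m * ((1 - inverse x) / (1 - x)) = - (x ^ (2 * m + 1))"
      using that by (simp add: field_simps power_mult_distrib mult_2 mult_2_right power_add)
    finally show ?thesis .
  qed
  have exponent: "(- int (Suc m))\<^sup>2 = int (m\<^sup>2 + (2 * m + 1))"
    by (simp add: power2_eq_square algebra_simps)
  have minus: "(a*b*c) powi (- int (Suc m)) * q powi ((- int (Suc m))\<^sup>2)
      = inverse ((a*b*c) ^ Suc m) * (q ^ m\<^sup>2 * q ^ (2 * m + 1))"
    unfolding exponent power_int_of_nat by (simp add: power_int_minus power_add del: of_nat_Suc)
  define R where "R = qpoch_nat (q/a) q m / qpoch_nat (a*q) q m * (qpoch_nat (q/b) q m / qpoch_nat (b*q) q m)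
    * (qpoch_nat (q/c) q m / qpoch_nat (c*q) q m)"
  have "bilateral_summand_shifted q a b c (- int (Suc m))
      = R * (- (a ^ (2 * m + 1)) * - (b ^ (2 * m + 1)) * - (c ^ (2 * m + 1))
        * (inverse ((a*b*c) ^ Suc m) * (q ^ m\<^sup>2 * q ^ (2 * m + 1))))"
    unfolding bilateral_summand_shifted_def times_divide_times_eq[symmetric] mult.assoc[of _ _ "q powi _"] minus
      ratio[OF assms(2,5)] ratio[OF assms(3,6)] ratio[OF assms(4,7)] R_def
    by (simp only: mult_ac)
  also have "\<dots> = - (q ^ (2 * m + 1)) * (R * ((a*b*c) ^ m * q ^ m\<^sup>2))"
    using assms by (simp add: field_simps power_mult_distrib power_add mult_2_right)
  also have "R * ((a*b*c) ^ m * q ^ m\<^sup>2) = bilateral_summand_shifted q a b c (int m)"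
    unfolding bilateral_summand_shifted_of_nat R_def by (simp add: field_simps)
  finally show ?thesis .
qed

lemma q_nonroot_of_unityI:
  fixes q :: complex
  assumes "q \<noteq> 0" "norm q < 1"
  shows "q_nonroot_of_unity q"
proof
  fix m :: nat assume "1 \<le> m"
  then have "norm (q ^ m) < 1" using assms by (simp add: norm_power power_less_one_iff)
  then show "q ^ m \<noteq> 1" by auto
qed (use assms in simp)

context
  fixes q b c :: complex and N :: nat
  assumes q_nz: "q \<noteq> 0" and q_lt_1: "norm q < 1"
    and b_nz: "b \<noteq> 0" and c_nz: "c \<noteq> 0"
    and b_generic: "\<And>j. b * q ^ j \<noteq> 1" and c_generic: "\<And>j. c * q ^ j \<noteq> 1"
    and abc_generic: "\<And>m::int. q ^ Suc N * b * c \<noteq> q powi m"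
begin

interpretation q_nonroot_of_unity q
  using q_nonroot_of_unityI q_nz q_lt_1 .

interpretation A1: qwatson q 1
  by unfold_locales (use q_pow_ne_1 in auto)

interpretation Aq: qwatson q q
  by unfold_locales (use q_pow_ne_1 q_nz in \<open>auto simp flip: power_Suc\<close>)

lemma abc_q_pow_ne: "q ^ Suc N * b * c * q ^ j \<noteq> q ^ k"
proof
  assume "q ^ Suc N * b * c * q ^ j = q ^ k"
  then have "q ^ Suc N * b * c = q powi (int k - int j)"
    using q_nz by (simp add: power_int_diff field_simps)
  then show False using abc_generic by blast
qed

lemma qpoch_nat_b_nonzero: "qpoch_nat b q n \<noteq> 0" and qpoch_nat_c_nonzero: "qpoch_nat c q n \<noteq> 0"
  using b_generic c_generic by (simp_all add: qpoch_nat_nonzero)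

lemma qpoch_nat_bq_nonzero: "qpoch_nat (b * q) q n \<noteq> 0" and qpoch_nat_cq_nonzero: "qpoch_nat (c * q) q n \<noteq> 0"
  using b_generic c_generic by (auto intro!: qpoch_nat_nonzero simp: mult.assoc simp flip: power_Suc)

lemma qpoch_nat_q_abc_nonzero: "1 \<le> s \<Longrightarrow> qpoch_nat (q ^ s / (q ^ Suc N * b * c)) q n \<noteq> 0"
proof (rule qpoch_nat_nonzero)
  fix t
  show "q ^ s / (q ^ Suc N * b * c) * q ^ t \<noteq> 1"
    using abc_q_pow_ne[of 0 "s + t"] q_nz b_nz c_nz by (auto simp: field_simps power_add)
qed

lemma q_div_q_pow_Suc: "q / q ^ Suc N = inverse q ^ N"
  using q_nz by (simp add: field_simps power_inverse)

lemma bilateral_summand_vanishing: "N < m \<Longrightarrow> bilateral_summand q (q ^ Suc N) b c (int m) = 0"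
  and bilateral_summand_shifted_vanishing: "N < m \<Longrightarrow> bilateral_summand_shifted q (q ^ Suc N) b c (int m) = 0"
  unfolding bilateral_summand_of_nat bilateral_summand_shifted_of_nat q_div_q_pow_Suc
  by (simp_all add: qpoch_nat_q_inverse_eq_0)

lemma vwp_weight_A1: "A1.vwp_weight m = 1 + (if m = 0 then 0 else q ^ m)"
proof (cases "m = 0")
  case False
  have "qpoch_nat q q m = qpoch_ivl 1 q 1 m * (1 - q ^ m)"
    using qpoch_nat_mult_q[of 1 q m] qpoch_ivl_Suc[of 1 m 1 q] False by simp
  moreover have "qpoch_ivl 1 q 1 m \<noteq> 0" "1 - q ^ m \<noteq> 0"
    using A1.qpoch_ivl_A_nonzero q_pow_ne_1[of m] False by auto
  moreover have "1 - q ^ (2 * m) = (1 - q ^ m) * (1 + q ^ m)"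
    by (simp add: algebra_simps mult_2 mult_2_right power_add)
  ultimately show ?thesis
    using False by (simp add: A1.vwp_weight_def)
qed (simp add: A1.vwp_weight_def)

lemma bilateral_summand_has_sum_finite:
  "(bilateral_summand q (q ^ Suc N) b c has_sum
     (\<Sum>m\<le>N. A1.vwp_weight m * bilateral_summand q (q ^ Suc N) b c (int m))) UNIV"
proof -
  define f where "f = bilateral_summand q (q ^ Suc N) b c"
  have reflect: "f (- int (Suc m)) = q ^ Suc m * f (int (Suc m))" for m
    using bilateral_summand_reflect[of q "q ^ Suc N" b c "Suc m"] q_nz b_nz c_nz by (simp add: f_def)
  have vanish: "N < m \<Longrightarrow> f (int m) = 0" for m
    unfolding f_def by (rule bilateral_summand_vanishing)
  have "(f has_sum ((\<Sum>m\<le>N. f (int m)) + (\<Sum>m\<le>N. f (- int (Suc m))))) UNIV"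
  proof (rule has_sum_int_of_vanishing)
    fix m assume "N < m"
    then show "f (int m) = 0" "f (- int (Suc m)) = 0"
      unfolding reflect using vanish[of m] vanish[of "Suc m"] by simp_all
  qed
  also have "(\<Sum>m\<le>N. f (- int (Suc m))) = (\<Sum>m\<le>Suc N. (if m = 0 then 0 else q ^ m) * f (int m))"
    by (simp only: sum.atMost_Suc_shift reflect) simp
  also have "\<dots> = (\<Sum>m\<le>N. (if m = 0 then 0 else q ^ m) * f (int m))"
    using vanish[of "Suc N"] by simp
  finally show ?thesis
    by (simp add: f_def vwp_weight_A1 sum.distrib algebra_simps)
qed

lemma watson_for_bilateral_summand:
  "(\<Sum>m\<le>N. A1.vwp_weight m * bilateral_summand q (q ^ Suc N) b c (int m))
   = qpoch_nat q q N * qpoch_nat (b * c / q) q N / (qpoch_nat b q N * qpoch_nat c q N)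
     * (\<Sum>k\<le>N. qpoch_nat (inverse q ^ N) q k * qpoch_nat (q / b) q k * qpoch_nat (q / c) q k
        / (qpoch_nat q q k * qpoch_nat (q ^ 3 / (q ^ Suc N * b * c)) q k) * q ^ k)"
proof -
  have e: "q / (q / b) = b" "q / (q / c) = c" "q / (q / b * (q / c)) = b * c / q"
    "q ^ (N + 2) / (q / b * (q / c)) = q ^ N * b * c"
    "q / b * (q / c) * inverse q ^ N = q ^ 3 / (q ^ Suc N * b * c)"
    using q_nz b_nz c_nz by (simp_all add: field_simps power_inverse power2_eq_square power3_eq_cube)
  note watson = A1.limiting_watson_transformation[of "q / b" "q / c" N,
      unfolded mult_1_left power_one div_by_1 e Suc_eq_plus1[symmetric]]
  have summand: "A1.vwp_weight m * bilateral_summand q (q ^ Suc N) b c (int m)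
      = A1.vwp_weight m * qpoch_nat (inverse q ^ N) q m * qpoch_nat (q / b) q m * qpoch_nat (q / c) q m
        / (qpoch_nat (q ^ Suc N) q m * qpoch_nat b q m * qpoch_nat c q m) * (q ^ N * b * c) ^ m * q ^ (m\<^sup>2 - m)"
    for m
  proof -
    have "(q ^ Suc N * b * c) ^ m * q powi (int m ^ 2 - 2 * int m) = (q ^ N * b * c) ^ m * q ^ (m\<^sup>2 - m)"
      unfolding power_int_square_minus_double[OF q_nz] using q_nz by (simp add: power_mult_distrib field_simps)
    then show ?thesis
      unfolding bilateral_summand_of_nat q_div_q_pow_Suc by (simp add: mult.assoc)
  qed
  show ?thesis
    unfolding summand
    by (rule watson[OF _ _ qpoch_nat_b_nonzero qpoch_nat_c_nonzero qpoch_nat_q_abc_nonzero[OF one_le_numeral]])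
       (use q_nz b_nz c_nz in simp_all)
qed

lemma qpoch_inf_ratio:
  defines "a \<equiv> q ^ Suc N"
  shows "qpoch_inf q q * qpoch_inf (a*b/q) q * qpoch_inf (b*c/q) q * qpoch_inf (a*c/q) q
      / (qpoch_inf a q * qpoch_inf b q * qpoch_inf c q * qpoch_inf (a*b*c/q^2) q)
    = qpoch_nat q q N * qpoch_nat (b * c / q) q N / (qpoch_nat b q N * qpoch_nat c q N)"
proof -
  have split: "qpoch_inf x q = qpoch_nat x q N * qpoch_inf y q" if "x * q ^ N = y" for x y
    using qpoch_inf_split[OF q_lt_1, of x N] that by simp
  have "qpoch_inf a q \<noteq> 0"
  proof (rule qpoch_inf_nonzero[OF q_lt_1])
    show "a * q ^ j \<noteq> 1" for j
      using q_pow_ne_1[of "Suc N + j"] by (simp add: a_def power_add mult.assoc)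
  qed
  moreover have "qpoch_inf (a*b/q) q \<noteq> 0" "qpoch_inf (a*c/q) q \<noteq> 0"
    using b_generic[of "N + _"] c_generic[of "N + _"] q_nz
    by (auto intro!: qpoch_inf_nonzero[OF q_lt_1] simp: a_def power_add mult_ac)
  moreover have "qpoch_inf (a*b*c/q^2) q \<noteq> 0"
    using abc_q_pow_ne[of _ 2] q_nz
    by (intro qpoch_inf_nonzero[OF q_lt_1]) (auto simp: a_def field_simps)
  moreover have "qpoch_inf q q = qpoch_nat q q N * qpoch_inf a q"
    "qpoch_inf b q = qpoch_nat b q N * qpoch_inf (a*b/q) q"
    "qpoch_inf c q = qpoch_nat c q N * qpoch_inf (a*c/q) q"
    "qpoch_inf (b*c/q) q = qpoch_nat (b*c/q) q N * qpoch_inf (a*b*c/q^2) q"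
    using q_nz by (auto intro!: split simp: a_def field_simps power2_eq_square)
  ultimately show ?thesis
    by (simp add: field_simps)
qed

lemma suminf_terminating:
  defines "a \<equiv> q ^ Suc N"
  shows "(\<Sum>k. qpoch (q/a) q (int k) * qpoch (q/b) q (int k) * qpoch (q/c) q (int k)
      / (qpoch q q (int k) * qpoch (q^s/(a*b*c)) q (int k)) * q ^ k)
    = (\<Sum>k\<le>N. qpoch_nat (inverse q ^ N) q k * qpoch_nat (q / b) q k * qpoch_nat (q / c) q k
      / (qpoch_nat q q k * qpoch_nat (q ^ s / (q ^ Suc N * b * c)) q k) * q ^ k)"
  unfolding a_def qpoch_of_nat q_div_q_pow_Suc
  by (rule suminf_finite) (auto simp: qpoch_nat_q_inverse_eq_0)

theorem bilateral_summand_has_sum: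
  defines "a \<equiv> q ^ Suc N"
  shows "(bilateral_summand q a b c has_sum
      (qpoch_inf q q * qpoch_inf (a*b/q) q * qpoch_inf (b*c/q) q * qpoch_inf (a*c/q) q
        / (qpoch_inf a q * qpoch_inf b q * qpoch_inf c q * qpoch_inf (a*b*c/q^2) q)
       * (\<Sum>k. qpoch (q/a) q (int k) * qpoch (q/b) q (int k) * qpoch (q/c) q (int k)
          / (qpoch q q (int k) * qpoch (q^3/(a*b*c)) q (int k)) * q ^ k))) UNIV"
  using bilateral_summand_has_sum_finite
  unfolding a_def qpoch_inf_ratio suminf_terminating watson_for_bilateral_summand .


lemma vwp_weight_Aq: "Aq.vwp_weight m = (1 - q ^ (2 * m + 1)) / (1 - q)"
proof (cases m)
  case (Suc k)
  have "qpoch_nat q q m = (1 - q) * qpoch_ivl q q 1 m"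
    using qpoch_nat_Suc'[of q q k] qpoch_nat_mult_q[of q q k] Suc by simp
  then have "Aq.vwp_weight m = qpoch_ivl q q 1 m * (1 - q ^ (2 * m + 1)) / ((1 - q) * qpoch_ivl q q 1 m)"
    using Suc by (simp add: Aq.vwp_weight_def)
  moreover have "qpoch_ivl q q 1 m \<noteq> 0"
    using Aq.qpoch_ivl_A_nonzero by auto
  ultimately show ?thesis
    by simp
qed (use q_pow_ne_1[of 1] in \<open>simp add: Aq.vwp_weight_def\<close>)

lemma bilateral_summand_shifted_has_sum_finite:
  "(bilateral_summand_shifted q (q ^ Suc N) b c has_sum
     ((1 - q) * (\<Sum>m\<le>N. Aq.vwp_weight m * bilateral_summand_shifted q (q ^ Suc N) b c (int m)))) UNIV"
proof -
  define f where "f = bilateral_summand_shifted q (q ^ Suc N) b c"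
  have "q ^ Suc N \<noteq> 1" "b \<noteq> 1" "c \<noteq> 1"
    using q_pow_ne_1[of "Suc N"] b_generic[of 0] c_generic[of 0] by auto
  then have reflect: "f (- int (Suc m)) = - (q ^ (2 * m + 1)) * f (int m)" for m
    using bilateral_summand_shifted_reflect[of q "q ^ Suc N" b c m] q_nz b_nz c_nz by (simp add: f_def)
  have vanish: "N < m \<Longrightarrow> f (int m) = 0" for m
    unfolding f_def by (rule bilateral_summand_shifted_vanishing)
  have "(f has_sum ((\<Sum>m\<le>N. f (int m)) + (\<Sum>m\<le>N. f (- int (Suc m))))) UNIV"
  proof (rule has_sum_int_of_vanishing)
    fix m assume "N < m"
    then show "f (int m) = 0" "f (- int (Suc m)) = 0"
      unfolding reflect using vanish[of m] by simp_all
  qed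
  also have "(\<Sum>m\<le>N. f (int m)) + (\<Sum>m\<le>N. f (- int (Suc m)))
      = (\<Sum>m\<le>N. (1 - q ^ (2 * m + 1)) * f (int m))"
    by (simp only: reflect sum.distrib[symmetric]) (simp add: algebra_simps)
  also have "\<dots> = (1 - q) * (\<Sum>m\<le>N. Aq.vwp_weight m * f (int m))"
    using q_pow_ne_1[of 1] by (simp add: vwp_weight_Aq sum_distrib_left)
  finally show ?thesis
    by (simp add: f_def)
qed

lemma watson_for_bilateral_summand_shifted:
  "(\<Sum>m\<le>N. Aq.vwp_weight m * bilateral_summand_shifted q (q ^ Suc N) b c (int m))
   = qpoch_nat (q * q) q N * qpoch_nat (b * c) q N / (qpoch_nat (b * q) q N * qpoch_nat (c * q) q N)
     * (\<Sum>k\<le>N. qpoch_nat (inverse q ^ N) q k * qpoch_nat (q / b) q k * qpoch_nat (q / c) q k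
        / (qpoch_nat q q k * qpoch_nat (q ^ 2 / (q ^ Suc N * b * c)) q k) * q ^ k)"
proof -
  have e: "q * q / (q / b) = b * q" "q * q / (q / c) = c * q" "q * q / (q / b * (q / c)) = b * c"
    "q\<^sup>2 * q ^ (N + 2) / (q / b * (q / c)) = q ^ Suc N * b * c * q"
    "q / b * (q / c) * inverse q ^ N / q = q ^ 2 / (q ^ Suc N * b * c)"
    "q * q ^ Suc N = q ^ Suc N * q"
    using q_nz b_nz c_nz by (simp_all add: field_simps power_inverse power2_eq_square)
  note watson = Aq.limiting_watson_transformation[of "q / b" "q / c" N,
      unfolded Suc_eq_plus1[symmetric] e]
  have summand: "Aq.vwp_weight m * bilateral_summand_shifted q (q ^ Suc N) b c (int m)
      = Aq.vwp_weight m * qpoch_nat (inverse q ^ N) q m * qpoch_nat (q / b) q m * qpoch_nat (q / c) q m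
        / (qpoch_nat (q ^ Suc N * q) q m * qpoch_nat (b * q) q m * qpoch_nat (c * q) q m)
        * (q ^ Suc N * b * c * q) ^ m * q ^ (m\<^sup>2 - m)"
    for m
  proof -
    have "q ^ m * q ^ (m\<^sup>2 - m) = q ^ m\<^sup>2"
      by (simp add: power2_eq_square flip: power_add)
    then have "(q ^ Suc N * b * c) ^ m * q ^ m\<^sup>2 = (q ^ Suc N * b * c * q) ^ m * q ^ (m\<^sup>2 - m)"
      by (simp add: power_mult_distrib mult_ac)
    then show ?thesis
      unfolding bilateral_summand_shifted_of_nat q_div_q_pow_Suc by (simp add: mult.assoc)
  qed
  show ?thesis
    unfolding summand
    by (rule watson[OF _ _ qpoch_nat_bq_nonzero qpoch_nat_cq_nonzero qpoch_nat_q_abc_nonzero[OF one_le_numeral]])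
       (use q_nz b_nz c_nz in simp_all)
qed

lemma qpoch_inf_ratio_shifted:
  defines "a \<equiv> q ^ Suc N"
  shows "qpoch_inf q q * qpoch_inf (a*b) q * qpoch_inf (b*c) q * qpoch_inf (a*c) q
      / (qpoch_inf (a*q) q * qpoch_inf (b*q) q * qpoch_inf (c*q) q * qpoch_inf (a*b*c/q) q)
    = qpoch_nat q q (Suc N) * qpoch_nat (b * c) q N / (qpoch_nat (b * q) q N * qpoch_nat (c * q) q N)"
proof -
  have split: "qpoch_inf x q = qpoch_nat x q n * qpoch_inf y q" if "x * q ^ n = y" for x y n
    using qpoch_inf_split[OF q_lt_1, of x n] that by simp
  have "qpoch_inf (a*q) q \<noteq> 0"
  proof (rule qpoch_inf_nonzero[OF q_lt_1])
    show "a * q * q ^ j \<noteq> 1" for j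
      using q_pow_ne_1[of "Suc N + 1 + j"] by (simp add: a_def power_add mult_ac)
  qed
  moreover have "qpoch_inf (a*b) q \<noteq> 0" "qpoch_inf (a*c) q \<noteq> 0"
    using b_generic[of "Suc N + _"] c_generic[of "Suc N + _"]
    by (auto intro!: qpoch_inf_nonzero[OF q_lt_1] simp: a_def power_add mult_ac)
  moreover have "qpoch_inf (a*b*c/q) q \<noteq> 0"
    using abc_q_pow_ne[of _ 1] q_nz
    by (intro qpoch_inf_nonzero[OF q_lt_1]) (auto simp: a_def field_simps)
  moreover have "qpoch_inf q q = qpoch_nat q q (Suc N) * qpoch_inf (a*q) q"
    "qpoch_inf (b*q) q = qpoch_nat (b*q) q N * qpoch_inf (a*b) q"
    "qpoch_inf (c*q) q = qpoch_nat (c*q) q N * qpoch_inf (a*c) q"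
    "qpoch_inf (b*c) q = qpoch_nat (b*c) q N * qpoch_inf (a*b*c/q) q"
    using q_nz by (auto intro!: split simp: a_def field_simps)
  ultimately show ?thesis
    using qpoch_nat_bq_nonzero qpoch_nat_cq_nonzero by (simp add: field_simps del: qpoch_nat_Suc)
qed

theorem bilateral_summand_shifted_has_sum:
  defines "a \<equiv> q ^ Suc N"
  shows "(bilateral_summand_shifted q a b c has_sum
      (qpoch_inf q q * qpoch_inf (a*b) q * qpoch_inf (b*c) q * qpoch_inf (a*c) q
        / (qpoch_inf (a*q) q * qpoch_inf (b*q) q * qpoch_inf (c*q) q * qpoch_inf (a*b*c/q) q)
       * (\<Sum>k. qpoch (q/a) q (int k) * qpoch (q/b) q (int k) * qpoch (q/c) q (int k)
          / (qpoch q q (int k) * qpoch (q^2/(a*b*c)) q (int k)) * q ^ k))) UNIV"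
  using bilateral_summand_shifted_has_sum_finite
  unfolding a_def qpoch_inf_ratio_shifted suminf_terminating watson_for_bilateral_summand_shifted
  by (simp add: qpoch_nat_Suc' mult_ac)

end

theorem corollary1p2:
  fixes q a b c :: complex
  assumes q: "0 < cmod q" "cmod q < 1"
    and special: "\<exists>n::nat. n \<ge> 1 \<and> (a = q ^ n \<or> b = q ^ n \<or> c = q ^ n)"
    and nz: "a \<noteq> 0" "b \<noteq> 0" "c \<noteq> 0"
    and wd_a: "\<forall>j::nat. a * q ^ j \<noteq> 1"
    and wd_b: "\<forall>j::nat. b * q ^ j \<noteq> 1"
    and wd_c: "\<forall>j::nat. c * q ^ j \<noteq> 1"
    and wd_abc: "\<forall>m::int. a * b * c \<noteq> q powi m"
  shows "((\<lambda>k::int. qpoch (q/a) q k * qpoch (q/b) q k * qpoch (q/c) q k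
                    / (qpoch a q k * qpoch b q k * qpoch c q k)
                    * (a*b*c) powi k * q powi (k^2 - 2*k))
         has_sum
           (qpoch_inf q q * qpoch_inf (a*b/q) q * qpoch_inf (b*c/q) q * qpoch_inf (a*c/q) q
            / (qpoch_inf a q * qpoch_inf b q * qpoch_inf c q * qpoch_inf (a*b*c/q^2) q)
            * (\<Sum>k::nat. qpoch (q/a) q (int k) * qpoch (q/b) q (int k) * qpoch (q/c) q (int k)
                 / (qpoch q q (int k) * qpoch (q^3/(a*b*c)) q (int k)) * q ^ k))) UNIV
       \<and> ((\<lambda>k::int. qpoch (q/a) q k * qpoch (q/b) q k * qpoch (q/c) q k
                    / (qpoch (a*q) q k * qpoch (b*q) q k * qpoch (c*q) q k)
                    * (a*b*c) powi k * q powi (k^2))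
         has_sum
           (qpoch_inf q q * qpoch_inf (a*b) q * qpoch_inf (b*c) q * qpoch_inf (a*c) q
            / (qpoch_inf (a*q) q * qpoch_inf (b*q) q * qpoch_inf (c*q) q * qpoch_inf (a*b*c/q) q)
            * (\<Sum>k::nat. qpoch (q/a) q (int k) * qpoch (q/b) q (int k) * qpoch (q/c) q (int k)
                 / (qpoch q q (int k) * qpoch (q^2/(a*b*c)) q (int k)) * q ^ k))) UNIV"
proof -
  obtain N where "a = q ^ Suc N \<or> b = q ^ Suc N \<or> c = q ^ Suc N"
    using special by (metis Suc_pred' less_le_trans zero_less_one)
  then consider (a) "a = q ^ Suc N" | (b) "b = q ^ Suc N" | (c) "c = q ^ Suc N"
    by blast
  moreover have "q \<noteq> 0"
    using q by auto
  note identities = bilateral_summand_has_sum bilateral_summand_shifted_has_sum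
  note summands = bilateral_summand_def bilateral_summand_shifted_def
  ultimately show ?thesis
  proof cases
    case a
    show ?thesis
      using identities[of q b c N, folded a, OF \<open>q \<noteq> 0\<close> q(2) nz(2,3)] wd_b wd_c wd_abc
      unfolding summands by auto
  next
    case b
    show ?thesis
      using identities[of q a c N, folded b, OF \<open>q \<noteq> 0\<close> q(2) nz(1,3)] wd_a wd_c wd_abc
      unfolding summands by (auto simp: mult_ac)
  next
    case c
    show ?thesis
      using identities[of q a b N, folded c, OF \<open>q \<noteq> 0\<close> q(2) nz(1,2)] wd_a wd_b wd_abc
      unfolding summands by (auto simp: mult_ac)
  qed
qed

end
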